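(* Let $\epsilon\in]0,1[$. The set $N_0(\epsilon)$ is empty. Let $n\geqslant1$. The set $N_n(\epsilon)=\mathcal{P}^-_{0_n}(\square[n],\epsilon)$, equipped with the compact-open topology, is $\Delta$-generated, $\Delta$-Hausdorff, metrizable, contractible, compact and sequentially compact.
   Context: A natural directed path of $[0,1]^n$ is a continuous map $\gamma=(\gamma_1,\dots,\gamma_n):[0,\ell]\to[0,1]^n$ with each $\gamma_i$ non-decreasing, $\gamma(0)=0_n=(0,\dots,0)$ and $\gamma_1(t)+\dots+\gamma_n(t)=t$ for all $t\in[0,\ell]$. For $\epsilon\in]0,1[$, $N_n(\epsilon)$ is the set of natural directed paths $[0,\epsilon]\to[0,1]^n$ (for $n=0$, $[0,1]^0$ is a point). $\mathcal{P}^-_{0_n}(\square[n],\epsilon)$ denotes the set of paths $|c|_{geom}\phi$ with $c$ a cube of dimension $\geqslant1$ of the standard precubical $n$-cube $\square[n]$ with initial vertex $0_n$ and $\phi$ a natural directed path of length $\epsilon$ in $[0,1]^{\dim c}$; it coincides with $N_n(\epsilon)$. Compact means Hausdorff and quasi-compact. $\Delta$-generated spaces are those whose topology is final for the maps from topological simplices; $\Delta$-Hausdorff is the corresponding separation property (images of maps from simplices are closed). *)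

theory Defs
  imports "HOL-Analysis.Analysis" "HOL-Homology.Simplices"
begin

text \<open>The cube [0,1]^n, points are extensional functions on {..<n} (so [0,1]^0 is a point).\<close>
definition cube_set :: "nat \<Rightarrow> (nat \<Rightarrow> real) set" where
  "cube_set n = PiE {..<n} (\<lambda>_. {0..1})"

definition cube_top :: "nat \<Rightarrow> (nat \<Rightarrow> real) topology" where
  "cube_top n = subtopology (powertop_real {..<n}) (cube_set n)"

definition natural_dipath :: "nat \<Rightarrow> real \<Rightarrow> (real \<Rightarrow> nat \<Rightarrow> real) \<Rightarrow> bool" where
  "natural_dipath n l \<gamma> \<longleftrightarrow>
     \<gamma> \<in> {0..l} \<rightarrow>\<^sub>E cube_set n \<and>
     continuous_map (top_of_set {0..l}) (cube_top n) \<gamma> \<and>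
     (\<forall>i<n. mono_on {0..l} (\<lambda>t. \<gamma> t i)) \<and>
     \<gamma> 0 = (\<lambda>i\<in>{..<n}. 0) \<and>
     (\<forall>t\<in>{0..l}. (\<Sum>i<n. \<gamma> t i) = t)"

definition N :: "nat \<Rightarrow> real \<Rightarrow> (real \<Rightarrow> nat \<Rightarrow> real) set" where
  "N n \<epsilon> = {\<gamma>. natural_dipath n \<epsilon> \<gamma>}"

definition compact_open :: "'a topology \<Rightarrow> 'b topology \<Rightarrow> ('a \<Rightarrow> 'b) topology" where
  "compact_open X Y = topology_generated_by
     {{f \<in> topspace X \<rightarrow>\<^sub>E topspace Y. continuous_map X Y f \<and> f ` K \<subseteq> U} | K U.
        compactin X K \<and> openin Y U}"

definition simplex_top :: "nat \<Rightarrow> (nat \<Rightarrow> real) topology" where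
  "simplex_top m = subtopology (powertop_real UNIV) (standard_simplex m)"

definition delta_generated :: "'a topology \<Rightarrow> bool" where
  "delta_generated X \<longleftrightarrow>
     (\<forall>U. U \<subseteq> topspace X \<longrightarrow>
        (openin X U \<longleftrightarrow>
          (\<forall>m f. continuous_map (simplex_top m) X f \<longrightarrow>
                 openin (simplex_top m) {x \<in> standard_simplex m. f x \<in> U})))"

definition delta_hausdorff :: "'a topology \<Rightarrow> bool" where
  "delta_hausdorff X \<longleftrightarrow>
     (\<forall>m f. continuous_map (simplex_top m) X f \<longrightarrow> closedin X (f ` standard_simplex m))"

definition sequentially_compact_top :: "'a topology \<Rightarrow> bool" where
  "sequentially_compact_top X \<longleftrightarrow>
     (\<forall>\<sigma>::nat \<Rightarrow> 'a. range \<sigma> \<subseteq> topspace X \<longrightarrow>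
        (\<exists>r x. strict_mono r \<and> x \<in> topspace X \<and> limitin X (\<sigma> \<circ> r) x sequentially))"

end

theory Submission
  imports Defs
begin

text \<open>
  The coordinates of a natural d-path are monotone and sum to the time parameter, so they are
  1-Lipschitz. Hence the compact-open topology on \<open>N n \<epsilon>\<close> is the topology of pointwise
  convergence, in which \<open>N n \<epsilon>\<close> is a closed subset of the compact product of cubes indexed by
  \<open>[0, \<epsilon>]\<close>. This gives compactness and the Hausdorff property; restriction to rational times
  embeds \<open>N n \<epsilon>\<close> into a countable product of cubes, so it is metrizable and sequentially
  compact, and compact images of simplices are closed. \<open>N n \<epsilon>\<close> is convex, hence contractible;
  convexity also puts every convergent sequence on the polygonal path through its terms and
  its limit, which makes the metrizable space \<open>\<Delta>\<close>-generated. For \<open>n = 0\<close> the empty sum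
  cannot equal \<open>\<epsilon>\<close>.
\<close>

section \<open>Cubes and natural d-paths\<close>

lemma topspace_cube_top [simp]: "topspace (cube_top n) = cube_set n"
  unfolding cube_top_def cube_set_def by auto

lemma cube_top_eq_product: "cube_top n = product_topology (\<lambda>_. top_of_set {0..1}) {..<n}"
  unfolding cube_top_def cube_set_def by (simp add: subtopology_product_topology)

lemma compact_space_cube_top: "compact_space (cube_top n)"
  unfolding cube_top_eq_product by (simp add: compact_space_product_topology compact_space_subtopology)

lemma Hausdorff_space_cube_top: "Hausdorff_space (cube_top n)"
  unfolding cube_top_eq_product by (simp add: Hausdorff_space_product_topology Hausdorff_space_subtopology)

lemma metrizable_space_cube_top: "metrizable_space (cube_top n)"
  unfolding cube_top_def
  by (intro metrizable_space_subtopology) (simp add: metrizable_space_product_topology metrizable_space_euclidean)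

lemma continuous_map_cube_top_coordinate:
  "i < n \<Longrightarrow> continuous_map (cube_top n) euclideanreal (\<lambda>y. y i)"
  unfolding cube_top_def
  by (intro continuous_map_from_subtopology continuous_map_product_projection) auto

lemma powertop_real_box_subset:
  assumes "finite I" "openin (powertop_real I) W" "y \<in> W"
  obtains d where "d > 0" "\<And>z. z \<in> extensional I \<Longrightarrow> (\<forall>i\<in>I. \<bar>z i - y i\<bar> < d) \<Longrightarrow> z \<in> W"
proof -
  obtain U where U: "\<forall>i\<in>I. open (U i)" "y \<in> Pi\<^sub>E I U" "Pi\<^sub>E I U \<subseteq> W"
    using assms(2,3) unfolding openin_product_topology_alt by auto
  then have "\<forall>i\<in>I. \<exists>r>0. ball (y i) r \<subseteq> U i"
    by (meson PiE_E open_contains_ball)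
  then obtain r where r: "\<And>i. i \<in> I \<Longrightarrow> r i > 0 \<and> ball (y i) (r i) \<subseteq> U i"
    by metis
  define d where "d = Min (insert 1 (r ` I))"
  show thesis
  proof
    show "d > 0" unfolding d_def using r assms(1) by (subst Min_gr_iff) auto
    fix z assume z: "z \<in> extensional I" "\<forall>i\<in>I. \<bar>z i - y i\<bar> < d"
    have "z i \<in> U i" if "i \<in> I" for i
    proof -
      have "d \<le> r i" unfolding d_def using that assms(1) by (intro Min_le) auto
      then show ?thesis using r[OF that] z(2) that by (force simp: dist_real_def abs_minus_commute)
    qed
    then have "z \<in> Pi\<^sub>E I U" using z(1) by (simp add: PiE_iff)
    then show "z \<in> W" using U(3) by blast
  qed
qed

lemma cube_top_box_subset:
  assumes "openin (cube_top n) W" "y \<in> W"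
  obtains d where "d > 0" "\<And>z. z \<in> cube_set n \<Longrightarrow> (\<forall>i<n. \<bar>z i - y i\<bar> < d) \<Longrightarrow> z \<in> W"
proof -
  obtain W' where W': "openin (powertop_real {..<n}) W'" "W = W' \<inter> cube_set n"
    using assms(1) unfolding cube_top_def openin_subtopology by auto
  obtain d where "d > 0"
    and d: "\<And>z. z \<in> extensional {..<n} \<Longrightarrow> (\<forall>i\<in>{..<n}. \<bar>z i - y i\<bar> < d) \<Longrightarrow> z \<in> W'"
    using powertop_real_box_subset[OF _ W'(1), of y] W' assms(2) by blast
  show thesis
  proof (rule that[OF \<open>d > 0\<close>])
    fix z assume z: "z \<in> cube_set n" "\<forall>i<n. \<bar>z i - y i\<bar> < d"
    then have "z \<in> W'" by (intro d) (simp_all add: cube_set_def PiE_def)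
    then show "z \<in> W" using W'(2) z(1) by blast
  qed
qed

lemma mono_sum_imp_coordinate_lipschitz:
  fixes \<gamma> :: "real \<Rightarrow> nat \<Rightarrow> real"
  assumes "\<forall>i<n. mono_on S (\<lambda>t. \<gamma> t i)" "\<forall>t\<in>S. (\<Sum>i<n. \<gamma> t i) = t"
    and "s \<in> S" "t \<in> S" "i < n"
  shows "\<bar>\<gamma> t i - \<gamma> s i\<bar> \<le> \<bar>t - s\<bar>"
proof -
  have *: "\<bar>\<gamma> b i - \<gamma> a i\<bar> \<le> b - a" if "a \<in> S" "b \<in> S" "a \<le> b" for a b
  proof -
    have mono: "\<gamma> a j \<le> \<gamma> b j" if "j < n" for j
      using assms(1) \<open>a \<in> S\<close> \<open>b \<in> S\<close> \<open>a \<le> b\<close> that by (auto simp: mono_on_def)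
    have "\<gamma> b i - \<gamma> a i \<le> (\<Sum>j<n. \<gamma> b j - \<gamma> a j)"
      using assms(5) by (intro member_le_sum) (auto simp: mono)
    also have "\<dots> = b - a" using assms(2) that by (simp add: sum_subtractf)
    finally show ?thesis using mono[OF assms(5)] by simp
  qed
  show ?thesis
    using *[of s t] *[of t s] assms(3,4) by (cases "s \<le> t") (auto simp: abs_minus_commute)
qed

text \<open>Continuity and the initial point are redundant in the definition: the coordinates are
  1-Lipschitz, and at time 0 they are non-negative with sum 0.\<close>
lemma natural_dipath_iff:
  assumes "0 \<le> e"
  shows "natural_dipath n e \<gamma> \<longleftrightarrow>
     \<gamma> \<in> {0..e} \<rightarrow>\<^sub>E cube_set n \<and> (\<forall>i<n. mono_on {0..e} (\<lambda>t. \<gamma> t i)) \<and>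
     (\<forall>t\<in>{0..e}. (\<Sum>i<n. \<gamma> t i) = t)"
    (is "_ \<longleftrightarrow> ?R")
proof
  assume R: ?R
  have "continuous_map (top_of_set {0..e}) euclideanreal (\<lambda>t. \<gamma> t i)" if "i < n" for i
  proof -
    have "1-lipschitz_on {0..e} (\<lambda>t. \<gamma> t i)"
      using R mono_sum_imp_coordinate_lipschitz[of n _ \<gamma>] that
      by (intro lipschitz_onI) (auto simp: dist_real_def)
    then show ?thesis by (simp add: lipschitz_on_continuous_on)
  qed
  then have "continuous_map (top_of_set {0..e}) (cube_top n) \<gamma>"
    using R unfolding cube_top_def continuous_map_in_subtopology continuous_map_componentwise
    by (auto simp: cube_set_def PiE_def)
  moreover have "\<gamma> 0 = (\<lambda>i\<in>{..<n}. 0)"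
  proof -
    have "\<gamma> 0 \<in> cube_set n" "(\<Sum>i<n. \<gamma> 0 i) = 0" using R assms by auto
    moreover have "0 \<le> \<gamma> 0 i" if "i < n" for i
      using \<open>\<gamma> 0 \<in> cube_set n\<close> that by (auto simp: cube_set_def PiE_iff)
    ultimately have "\<forall>i<n. \<gamma> 0 i = 0"
      using sum_nonneg_eq_0_iff[of "{..<n}" "\<gamma> 0"] by simp
    with \<open>\<gamma> 0 \<in> cube_set n\<close> show ?thesis
      by (auto simp: cube_set_def PiE_def extensional_def)
  qed
  ultimately show "natural_dipath n e \<gamma>"
    using R unfolding natural_dipath_def by auto
qed (simp add: natural_dipath_def)

lemma N_subset_PiE: "N n e \<subseteq> {0..e} \<rightarrow>\<^sub>E cube_set n"
  unfolding N_def natural_dipath_def by auto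

lemma N_continuous_map: "\<gamma> \<in> N n e \<Longrightarrow> continuous_map (top_of_set {0..e}) (cube_top n) \<gamma>"
  unfolding N_def natural_dipath_def by auto

lemma N_coordinate_lipschitz:
  assumes "\<gamma> \<in> N n e" "s \<in> {0..e}" "t \<in> {0..e}" "i < n"
  shows "\<bar>\<gamma> t i - \<gamma> s i\<bar> \<le> \<bar>t - s\<bar>"
proof -
  have "\<forall>i<n. mono_on {0..e} (\<lambda>t. \<gamma> t i)" "\<forall>t\<in>{0..e}. (\<Sum>i<n. \<gamma> t i) = t"
    using assms(1) by (simp_all add: N_def natural_dipath_def)
  then show ?thesis using assms(2-4) by (rule mono_sum_imp_coordinate_lipschitz)
qed

lemma N_0_empty:
  assumes "0 < e"
  shows "N 0 e = {}"
proof -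
  have "\<not> natural_dipath 0 e \<gamma>" for \<gamma>
  proof
    assume "natural_dipath 0 e \<gamma>"
    then have "(\<Sum>i<0. \<gamma> e i) = e" using assms by (simp add: natural_dipath_def)
    then show False using assms by simp
  qed
  then show ?thesis by (simp add: N_def)
qed

section \<open>The compact-open topology\<close>

definition compact_open_subbasis :: "'a topology \<Rightarrow> 'b topology \<Rightarrow> ('a \<Rightarrow> 'b) set set" where
  "compact_open_subbasis X Y =
     {{f \<in> topspace X \<rightarrow>\<^sub>E topspace Y. continuous_map X Y f \<and> f ` K \<subseteq> U} | K U.
        compactin X K \<and> openin Y U}"

lemma compact_open_eq_generated: "compact_open X Y = topology_generated_by (compact_open_subbasis X Y)"
  unfolding compact_open_def compact_open_subbasis_def ..

lemma topspace_compact_open: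
  "topspace (compact_open X Y) = {f \<in> topspace X \<rightarrow>\<^sub>E topspace Y. continuous_map X Y f}"
proof -
  have "{f \<in> topspace X \<rightarrow>\<^sub>E topspace Y. continuous_map X Y f} \<in> compact_open_subbasis X Y"
    unfolding compact_open_subbasis_def
    by (intro CollectI exI[of _ "{}"] exI[of _ "topspace Y"]) auto
  then show ?thesis
    unfolding compact_open_eq_generated topology_generated_by_topspace
    by (auto simp: compact_open_subbasis_def)
qed

lemma openin_compact_open_image_subset:
  assumes "compactin X K" "openin Y U"
  shows "openin (compact_open X Y) {f \<in> topspace (compact_open X Y). f ` K \<subseteq> U}"
proof -
  have "{f \<in> topspace (compact_open X Y). f ` K \<subseteq> U} \<in> compact_open_subbasis X Y"
    unfolding compact_open_subbasis_def topspace_compact_open using assms by blast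
  then show ?thesis
    unfolding compact_open_eq_generated by (rule topology_generated_by_Basis)
qed

lemma continuous_map_compact_open_eval:
  assumes "t \<in> topspace X"
  shows "continuous_map (compact_open X Y) Y (\<lambda>f. f t)"
  unfolding continuous_map_def
proof (intro conjI allI impI)
  show "(\<lambda>f. f t) \<in> topspace (compact_open X Y) \<rightarrow> topspace Y"
    using assms by (auto simp: topspace_compact_open)
  fix U assume "openin Y U"
  then have "openin (compact_open X Y) {f \<in> topspace (compact_open X Y). f ` {t} \<subseteq> U}"
    using assms by (intro openin_compact_open_image_subset) auto
  then show "openin (compact_open X Y) {f \<in> topspace (compact_open X Y). f t \<in> U}"
    by simp
qed

lemma continuous_map_into_compact_open:
  assumes "g \<in> topspace Z \<rightarrow> topspace (compact_open X Y)"
    and "\<And>K U. compactin X K \<Longrightarrow> openin Y U \<Longrightarrow> openin Z {z \<in> topspace Z. g z ` K \<subseteq> U}"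
  shows "continuous_map Z (compact_open X Y) g"
  unfolding compact_open_eq_generated
proof (rule continuous_on_generated_topo)
  fix B assume "B \<in> compact_open_subbasis X Y"
  then obtain K U where KU: "compactin X K" "openin Y U"
    and B: "B = {f \<in> topspace X \<rightarrow>\<^sub>E topspace Y. continuous_map X Y f \<and> f ` K \<subseteq> U}"
    unfolding compact_open_subbasis_def by blast
  have "g -` B \<inter> topspace Z = {z \<in> topspace Z. g z ` K \<subseteq> U}"
    using assms(1) unfolding B topspace_compact_open by auto
  then show "openin Z (g -` B \<inter> topspace Z)" using assms(2)[OF KU] by simp
next
  show "g ` topspace Z \<subseteq> \<Union> (compact_open_subbasis X Y)"
    using assms(1) topology_generated_by_topspace[of "compact_open_subbasis X Y"]
    unfolding compact_open_eq_generated[symmetric] by blast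
qed

section \<open>The pointwise topology on natural d-paths\<close>

lemma closedin_Collect_Ball:
  assumes "\<And>j. j \<in> J \<Longrightarrow> closedin X {x \<in> topspace X. P j x}"
  shows "closedin X {x \<in> topspace X. \<forall>j\<in>J. P j x}"
proof (cases "J = {}")
  case False
  then have "{x \<in> topspace X. \<forall>j\<in>J. P j x} = (\<Inter>j\<in>J. {x \<in> topspace X. P j x})"
    by auto
  then show ?thesis using False assms by auto
qed simp

lemma openin_Collect_finite_Ball:
  assumes "finite J" "\<And>j. j \<in> J \<Longrightarrow> openin X {x \<in> topspace X. P j x}"
  shows "openin X {x \<in> topspace X. \<forall>j\<in>J. P j x}"
  using assms
proof (induction J rule: finite_induct)
  case (insert a J)
  have "{x \<in> topspace X. \<forall>j\<in>insert a J. P j x} =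
        {x \<in> topspace X. P a x} \<inter> {x \<in> topspace X. \<forall>j\<in>J. P j x}"
    by auto
  then show ?case using insert by auto
qed simp

definition pointwise_top :: "nat \<Rightarrow> real \<Rightarrow> (real \<Rightarrow> nat \<Rightarrow> real) topology" where
  "pointwise_top n e = product_topology (\<lambda>_. cube_top n) {0..e}"

definition N_pointwise :: "nat \<Rightarrow> real \<Rightarrow> (real \<Rightarrow> nat \<Rightarrow> real) topology" where
  "N_pointwise n e = subtopology (pointwise_top n e) (N n e)"

lemma topspace_pointwise_top: "topspace (pointwise_top n e) = {0..e} \<rightarrow>\<^sub>E cube_set n"
  unfolding pointwise_top_def by simp

lemma topspace_N_pointwise [simp]: "topspace (N_pointwise n e) = N n e"
  unfolding N_pointwise_def using N_subset_PiE by (auto simp: topspace_pointwise_top)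

lemma continuous_map_pointwise_top_eval:
  assumes "t \<in> {0..e}" "i < n"
  shows "continuous_map (pointwise_top n e) euclideanreal (\<lambda>f. f t i)"
proof -
  have "continuous_map (pointwise_top n e) (cube_top n) (\<lambda>f. f t)"
    unfolding pointwise_top_def using assms(1) by (rule continuous_map_product_projection)
  then show ?thesis
    using continuous_map_compose[OF _ continuous_map_cube_top_coordinate[OF assms(2)]]
    by (simp add: o_def)
qed

lemma continuous_map_N_pointwise_eval:
  "t \<in> {0..e} \<Longrightarrow> i < n \<Longrightarrow> continuous_map (N_pointwise n e) euclideanreal (\<lambda>f. f t i)"
  unfolding N_pointwise_def by (intro continuous_map_from_subtopology continuous_map_pointwise_top_eval)

lemma continuous_map_into_N_pointwise:
  assumes "g \<in> topspace X \<rightarrow> N n e"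
    and "\<And>t i. t \<in> {0..e} \<Longrightarrow> i < n \<Longrightarrow> continuous_map X euclideanreal (\<lambda>x. g x t i)"
  shows "continuous_map X (N_pointwise n e) g"
  unfolding N_pointwise_def continuous_map_in_subtopology
proof
  have g: "g x \<in> {0..e} \<rightarrow>\<^sub>E cube_set n" if "x \<in> topspace X" for x
    using assms(1) N_subset_PiE that by blast
  have "continuous_map X (cube_top n) (\<lambda>x. g x t)" if "t \<in> {0..e}" for t
    unfolding cube_top_def continuous_map_in_subtopology continuous_map_componentwise
    using assms(2) g that by (auto simp: cube_set_def PiE_iff)
  then show "continuous_map X (pointwise_top n e) g"
    unfolding pointwise_top_def continuous_map_componentwise using g by (auto simp: PiE_iff)
qed (use assms(1) in auto)

lemma closedin_pointwise_top_N:
  assumes "0 \<le> e"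
  shows "closedin (pointwise_top n e) (N n e)"
proof -
  let ?X = "pointwise_top n e"
  have mono: "closedin ?X {f \<in> topspace ?X.
      \<forall>(s, t, i) \<in> {(s, t, i). s \<in> {0..e} \<and> t \<in> {0..e} \<and> s \<le> t \<and> i < n}. f s i \<le> f t i}"
  proof (rule closedin_Collect_Ball, clarify)
    fix s t i assume "s \<in> {0..e}" "t \<in> {0..e}" "i < n"
    then have "continuous_map ?X euclideanreal (\<lambda>f. f t i - f s i)"
      by (intro continuous_map_diff continuous_map_pointwise_top_eval)
    from closedin_continuous_map_preimage[OF this, of "{0..}"]
    show "closedin ?X {f \<in> topspace ?X. f s i \<le> f t i}" by simp
  qed
  have sum: "closedin ?X {f \<in> topspace ?X. \<forall>t\<in>{0..e}. (\<Sum>i<n. f t i) = t}"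
  proof (rule closedin_Collect_Ball)
    fix t assume "t \<in> {0..e}"
    then have "continuous_map ?X euclideanreal (\<lambda>f. \<Sum>i<n. f t i)"
      by (intro continuous_map_sum continuous_map_pointwise_top_eval) auto
    from closedin_continuous_map_preimage[OF this, of "{t}"]
    show "closedin ?X {f \<in> topspace ?X. (\<Sum>i<n. f t i) = t}" by simp
  qed
  have "N n e = {f \<in> topspace ?X.
      \<forall>(s, t, i) \<in> {(s, t, i). s \<in> {0..e} \<and> t \<in> {0..e} \<and> s \<le> t \<and> i < n}. f s i \<le> f t i} \<inter>
    {f \<in> topspace ?X. \<forall>t\<in>{0..e}. (\<Sum>i<n. f t i) = t}"
    unfolding N_def natural_dipath_iff[OF assms] topspace_pointwise_top mono_on_def by fastforce
  then show ?thesis using mono sum by (simp add: closedin_Int)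
qed

lemma compact_space_N_pointwise: "0 \<le> e \<Longrightarrow> compact_space (N_pointwise n e)"
  unfolding N_pointwise_def
  by (intro compact_space_subtopology closedin_compact_space closedin_pointwise_top_N)
    (simp add: pointwise_top_def compact_space_product_topology compact_space_cube_top)

lemma Hausdorff_space_N_pointwise: "Hausdorff_space (N_pointwise n e)"
  unfolding N_pointwise_def pointwise_top_def
  by (intro Hausdorff_space_subtopology) (simp add: Hausdorff_space_product_topology Hausdorff_space_cube_top)

lemma delta_hausdorff_if_Hausdorff:
  assumes "Hausdorff_space X"
  shows "delta_hausdorff X"
  unfolding delta_hausdorff_def
proof (intro allI impI)
  fix m and f :: "(nat \<Rightarrow> real) \<Rightarrow> 'a"
  assume f: "continuous_map (simplex_top m) X f"
  have "compactin (simplex_top m) (standard_simplex m)"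
    unfolding simplex_top_def compactin_subtopology using compactin_standard_simplex by blast
  from image_compactin[OF this f] show "closedin X (f ` standard_simplex m)"
    by (rule compactin_imp_closedin[OF assms])
qed

lemma N_image_subset_if_close_on_net:
  assumes f: "f \<in> N n e" and K: "K \<subseteq> {0..e}" and F: "F \<subseteq> K" "K \<subseteq> (\<Union>t\<in>F. ball t (d t / 2))"
    and close: "\<And>t i. t \<in> F \<Longrightarrow> i < n \<Longrightarrow> \<bar>f t i - g t i\<bar> < d t / 2"
    and tube: "\<And>t z. t \<in> K \<Longrightarrow> z \<in> cube_set n \<Longrightarrow> (\<forall>i<n. \<bar>z i - g t i\<bar> < d t) \<Longrightarrow> z \<in> W"
  shows "f ` K \<subseteq> W"
proof (rule image_subsetI)
  fix t' assume "t' \<in> K"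
  then obtain t where t: "t \<in> F" "dist t' t < d t / 2"
    using F(2) by (force simp: dist_commute)
  have "t \<in> {0..e}" "t' \<in> {0..e}" using K F(1) t(1) \<open>t' \<in> K\<close> by auto
  have "\<bar>f t' i - g t i\<bar> < d t" if "i < n" for i
  proof -
    have "\<bar>f t' i - f t i\<bar> \<le> \<bar>t' - t\<bar>"
      using N_coordinate_lipschitz[OF f \<open>t \<in> {0..e}\<close> \<open>t' \<in> {0..e}\<close> that] .
    moreover have "\<bar>f t i - g t i\<bar> < d t / 2" using close t(1) that .
    ultimately show ?thesis using t(2) unfolding dist_real_def by linarith
  qed
  moreover have "f t' \<in> cube_set n" using f N_subset_PiE \<open>t' \<in> {0..e}\<close> by blast
  ultimately show "f t' \<in> W" using tube t(1) F(1) by blast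
qed

text \<open>The paths of \<open>N n e\<close> are equi-Lipschitz, so the pointwise topology on them is as fine as
  the compact-open one: a uniform tube around \<open>g\<close> over \<open>K\<close> is cut out by finitely many
  evaluations at a net of \<open>K\<close>.\<close>
lemma openin_N_pointwise_image_subset:
  assumes K: "compactin (top_of_set {0..e}) K" and W: "openin (cube_top n) W"
  shows "openin (N_pointwise n e) {f \<in> N n e. f ` K \<subseteq> W}"
  unfolding openin_subopen[of _ "{f \<in> N n e. f ` K \<subseteq> W}"]
proof
  fix g assume g: "g \<in> {f \<in> N n e. f ` K \<subseteq> W}"
  have Ksub: "K \<subseteq> {0..e}" and "compact K"
    using K by (auto simp: compactin_subtopology)
  have "\<forall>t\<in>K. \<exists>d>0. \<forall>z\<in>cube_set n. (\<forall>i<n. \<bar>z i - g t i\<bar> < d) \<longrightarrow> z \<in> W"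
    using g cube_top_box_subset[OF W] by (metis (no_types, lifting) image_subset_iff mem_Collect_eq)
  then obtain d where d: "\<And>t. t \<in> K \<Longrightarrow> d t > 0"
    and dW: "\<And>t z. t \<in> K \<Longrightarrow> z \<in> cube_set n \<Longrightarrow> (\<forall>i<n. \<bar>z i - g t i\<bar> < d t) \<Longrightarrow> z \<in> W"
    by metis
  obtain F where F: "F \<subseteq> K" "finite F" "K \<subseteq> (\<Union>t\<in>F. ball t (d t / 2))"
    using compactE_image[OF \<open>compact K\<close>, of K "\<lambda>t. ball t (d t / 2)"] d by force
  define V where "V = {f \<in> topspace (N_pointwise n e).
     \<forall>(t, i) \<in> F \<times> {..<n}. \<bar>f t i - g t i\<bar> < d t / 2}"
  have "openin (N_pointwise n e) V"
    unfolding V_def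
  proof (rule openin_Collect_finite_Ball)
    show "finite (F \<times> {..<n})" using F by simp
    fix j assume "j \<in> F \<times> {..<n}"
    then obtain t i where j: "j = (t, i)" "t \<in> {0..e}" "i < n" using F Ksub by auto
    then have "continuous_map (N_pointwise n e) euclideanreal (\<lambda>f. f t i)"
      by (intro continuous_map_N_pointwise_eval)
    from openin_continuous_map_preimage[OF this, of "ball (g t i) (d t / 2)"]
    show "openin (N_pointwise n e)
        {f \<in> topspace (N_pointwise n e). case j of (t, i) \<Rightarrow> \<bar>f t i - g t i\<bar> < d t / 2}"
      by (simp add: j dist_real_def abs_minus_commute)
  qed
  moreover have "g \<in> V" unfolding V_def using g d F by auto
  moreover have "V \<subseteq> {f \<in> N n e. f ` K \<subseteq> W}"
  proof
    fix f assume "f \<in> V"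
    then have "f \<in> N n e" and close: "\<And>t i. t \<in> F \<Longrightarrow> i < n \<Longrightarrow> \<bar>f t i - g t i\<bar> < d t / 2"
      unfolding V_def by auto
    have "f ` K \<subseteq> W"
      using \<open>f \<in> N n e\<close> Ksub F(1,3) close dW by (rule N_image_subset_if_close_on_net)
    with \<open>f \<in> N n e\<close> show "f \<in> {f \<in> N n e. f ` K \<subseteq> W}" by simp
  qed
  ultimately show "\<exists>V. openin (N_pointwise n e) V \<and> g \<in> V \<and> V \<subseteq> {f \<in> N n e. f ` K \<subseteq> W}"
    by blast
qed

lemma N_subset_topspace_compact_open:
  "N n e \<subseteq> topspace (compact_open (top_of_set {0..e}) (cube_top n))"
  using N_subset_PiE N_continuous_map by (auto simp: topspace_compact_open)

lemma compact_open_N_eq_N_pointwise: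
  "subtopology (compact_open (top_of_set {0..e}) (cube_top n)) (N n e) = N_pointwise n e"
proof -
  let ?CO = "compact_open (top_of_set {0..e}) (cube_top n)"
  have topspace: "topspace (subtopology ?CO (N n e)) = N n e"
    using N_subset_topspace_compact_open by auto
  have "continuous_map (subtopology ?CO (N n e)) (N_pointwise n e) id"
  proof (rule continuous_map_into_N_pointwise)
    fix t i assume "t \<in> {0..e}" "i < n"
    then have "continuous_map ?CO euclideanreal (\<lambda>f. f t i)"
      using continuous_map_compose[OF continuous_map_compact_open_eval[of t]
          continuous_map_cube_top_coordinate[of i n]] by (simp add: o_def)
    then show "continuous_map (subtopology ?CO (N n e)) euclideanreal (\<lambda>f. id f t i)"
      by (simp add: continuous_map_from_subtopology)
  qed (simp add: topspace)
  moreover have "continuous_map (N_pointwise n e) (subtopology ?CO (N n e)) id"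
    unfolding continuous_map_in_subtopology
  proof
    show "continuous_map (N_pointwise n e) ?CO id"
    proof (rule continuous_map_into_compact_open)
      show "id \<in> topspace (N_pointwise n e) \<rightarrow> topspace ?CO"
        using N_subset_topspace_compact_open[of n e] by auto
    next
      fix K U assume "compactin (top_of_set {0..e}) K" "openin (cube_top n) U"
      then show "openin (N_pointwise n e) {f \<in> topspace (N_pointwise n e). id f ` K \<subseteq> U}"
        using openin_N_pointwise_image_subset by simp
    qed
  qed auto
  ultimately have "homeomorphic_maps (subtopology ?CO (N n e)) (N_pointwise n e) id id"
    by (simp add: homeomorphic_maps_def)
  then show ?thesis
    using homeomorphic_map_id homeomorphic_map_maps by metis
qed

section \<open>Metrizability\<close>

lemma metrizable_space_if_continuous_injection:
  assumes "compact_space X" "metrizable_space Y" "continuous_map X Y f" "inj_on f (topspace X)"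
  shows "metrizable_space X"
proof -
  have "embedding_map X Y f"
    by (rule continuous_imp_embedding_map[OF assms(3,1) metrizable_imp_Hausdorff_space[OF assms(2)] assms(4)])
  then have "X homeomorphic_space subtopology Y (f ` topspace X)"
    unfolding embedding_map_def by (rule homeomorphic_map_imp_homeomorphic_space)
  then show ?thesis
    by (simp add: homeomorphic_metrizable_space metrizable_space_subtopology assms(2))
qed

lemma sequentially_compact_top_if_compact_metrizable:
  assumes "compact_space X" "metrizable_space X"
  shows "sequentially_compact_top X"
proof -
  obtain M d where M: "Metric_space M d" and X: "X = Metric_space.mtopology M d"
    using assms(2) unfolding metrizable_space_def by blast
  interpret Metric_space M d by (fact M)
  have "\<forall>\<sigma>::nat \<Rightarrow> 'a. range \<sigma> \<subseteq> M \<longrightarrow>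
      (\<exists>l r. l \<in> M \<and> strict_mono r \<and> limitin mtopology (\<sigma> \<circ> r) l sequentially)"
    using assms(1) unfolding X compact_space_sequentially .
  then show ?thesis
    unfolding X sequentially_compact_top_def topspace_mtopology by metis
qed

lemma N_eqI_on_Rats:
  assumes "0 < e" "f \<in> N n e" "g \<in> N n e" and eq: "\<And>q. q \<in> {0..e} \<inter> \<rat> \<Longrightarrow> f q = g q"
  shows "f = g"
proof -
  have pointwise: "f t i = g t i" if t: "t \<in> {0..e}" and i: "i < n" for t i
  proof (rule ccontr)
    assume "f t i \<noteq> g t i"
    define r where "r = \<bar>f t i - g t i\<bar> / 2"
    have "r > 0" using \<open>f t i \<noteq> g t i\<close> by (simp add: r_def)
    then have "max 0 (t - r) < min e (t + r)" using assms(1) t by auto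
    then obtain q where q: "q \<in> \<rat>" "max 0 (t - r) < q" "q < min e (t + r)"
      using Rats_dense_in_real by blast
    then have "q \<in> {0..e}" "\<bar>t - q\<bar> < r" by auto
    have "\<bar>f t i - g t i\<bar> \<le> \<bar>f t i - f q i\<bar> + \<bar>g q i - g t i\<bar>"
      using eq[of q] q(1) \<open>q \<in> {0..e}\<close> by simp
    also have "\<dots> \<le> 2 * \<bar>t - q\<bar>"
      using N_coordinate_lipschitz[OF assms(2) \<open>q \<in> {0..e}\<close> t i]
        N_coordinate_lipschitz[OF assms(3) t \<open>q \<in> {0..e}\<close> i] by (simp add: abs_minus_commute)
    also have "\<dots> < \<bar>f t i - g t i\<bar>" using \<open>\<bar>t - q\<bar> < r\<close> by (simp add: r_def)
    finally show False by simp
  qed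
  have paths: "f \<in> {0..e} \<rightarrow>\<^sub>E cube_set n" "g \<in> {0..e} \<rightarrow>\<^sub>E cube_set n"
    using assms(2,3) N_subset_PiE by auto
  then show ?thesis
  proof (rule PiE_ext)
    fix t assume t: "t \<in> {0..e}"
    then have "f t \<in> Pi\<^sub>E {..<n} (\<lambda>_. {0..1})" "g t \<in> Pi\<^sub>E {..<n} (\<lambda>_. {0..1})"
      using paths unfolding cube_set_def by blast+
    then show "f t = g t"
      by (rule PiE_ext) (use pointwise t in auto)
  qed
qed

lemma metrizable_space_N_pointwise:
  assumes "0 < e"
  shows "metrizable_space (N_pointwise n e)"
proof (rule metrizable_space_if_continuous_injection)
  let ?R = "{0..e} \<inter> \<rat>"
  show "compact_space (N_pointwise n e)" using assms by (simp add: compact_space_N_pointwise)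
  have "countable {q \<in> ?R. \<not> (\<exists>a. topspace (cube_top n) \<subseteq> {a})}"
    by (rule countable_subset[OF _ countable_rat]) auto
  then show "metrizable_space (product_topology (\<lambda>_. cube_top n) ?R)"
    unfolding metrizable_space_product_topology by (simp add: metrizable_space_cube_top)
  have "continuous_map (N_pointwise n e) (cube_top n) (\<lambda>f. f q)" if "q \<in> ?R" for q
    unfolding N_pointwise_def pointwise_top_def using that
    by (intro continuous_map_from_subtopology continuous_map_product_projection) auto
  then show "continuous_map (N_pointwise n e) (product_topology (\<lambda>_. cube_top n) ?R) (\<lambda>f. restrict f ?R)"
    by (auto simp: continuous_map_componentwise)
  show "inj_on (\<lambda>f. restrict f ?R) (topspace (N_pointwise n e))"
  proof (rule inj_onI)
    fix f g assume f: "f \<in> topspace (N_pointwise n e)" and g: "g \<in> topspace (N_pointwise n e)"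
      and fg: "restrict f ?R = restrict g ?R"
    have "f q = g q" if "q \<in> ?R" for q
      using fun_cong[OF fg, of q] that by simp
    with N_eqI_on_Rats[OF assms] f g show "f = g" by simp
  qed
qed

section \<open>Convexity and contractibility\<close>

lemma N_restrict_eq:
  assumes "f \<in> N n e"
  shows "(\<lambda>t\<in>{0..e}. \<lambda>i\<in>{..<n}. f t i) = f"
proof -
  have f: "f \<in> {0..e} \<rightarrow>\<^sub>E cube_set n" using assms N_subset_PiE by blast
  have "(\<lambda>t\<in>{0..e}. \<lambda>i\<in>{..<n}. f t i) = (\<lambda>t\<in>{0..e}. f t)"
  proof (rule restrict_ext)
    fix t assume "t \<in> {0..e}"
    then have "f t \<in> extensional {..<n}" using f by (auto simp: cube_set_def PiE_def)
    then show "(\<lambda>i\<in>{..<n}. f t i) = f t" by (simp add: extensional_restrict)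
  qed
  also have "\<dots> = f" using f by (simp add: PiE_def extensional_restrict)
  finally show ?thesis .
qed

definition dipath_mix ::
    "nat \<Rightarrow> real \<Rightarrow> real \<Rightarrow> (real \<Rightarrow> nat \<Rightarrow> real) \<Rightarrow> (real \<Rightarrow> nat \<Rightarrow> real) \<Rightarrow> real \<Rightarrow> nat \<Rightarrow> real"
  where "dipath_mix n e s f g = (\<lambda>t\<in>{0..e}. \<lambda>i\<in>{..<n}. (1 - s) * f t i + s * g t i)"

lemma dipath_mix_0: "f \<in> N n e \<Longrightarrow> dipath_mix n e 0 f g = f"
  unfolding dipath_mix_def by (simp add: N_restrict_eq)

lemma dipath_mix_1: "g \<in> N n e \<Longrightarrow> dipath_mix n e 1 f g = g"
  unfolding dipath_mix_def by (simp add: N_restrict_eq)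

lemma dipath_mix_in_N:
  assumes "0 \<le> e" "f \<in> N n e" "g \<in> N n e" "s \<in> {0..1}"
  shows "dipath_mix n e s f g \<in> N n e"
proof -
  have f: "f \<in> {0..e} \<rightarrow>\<^sub>E cube_set n" "\<forall>i<n. mono_on {0..e} (\<lambda>t. f t i)"
      "\<forall>t\<in>{0..e}. (\<Sum>i<n. f t i) = t"
    and g: "g \<in> {0..e} \<rightarrow>\<^sub>E cube_set n" "\<forall>i<n. mono_on {0..e} (\<lambda>t. g t i)"
      "\<forall>t\<in>{0..e}. (\<Sum>i<n. g t i) = t"
    using assms(2,3) by (simp_all add: N_def natural_dipath_iff[OF assms(1)])
  have s: "0 \<le> s" "0 \<le> 1 - s" using assms(4) by auto
  have "(1 - s) * f t i + s * g t i \<in> {0..1}" if "t \<in> {0..e}" "i < n" for t i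
  proof -
    have "f t i \<in> {0..1}" "g t i \<in> {0..1}"
      using f(1) g(1) that by (auto simp: cube_set_def PiE_iff)
    then show ?thesis
      using s convex_bound_le[of "f t i" 1 "g t i" "1 - s" s] by auto
  qed
  then have "dipath_mix n e s f g \<in> {0..e} \<rightarrow>\<^sub>E cube_set n"
    by (auto simp: dipath_mix_def cube_set_def)
  moreover have "mono_on {0..e} (\<lambda>t. dipath_mix n e s f g t i)" if "i < n" for i
  proof (rule mono_onI)
    fix a b :: real assume ab: "a \<in> {0..e}" "b \<in> {0..e}" "a \<le> b"
    then have "f a i \<le> f b i" "g a i \<le> g b i"
      using f(2) g(2) that by (auto simp: mono_on_def)
    then show "dipath_mix n e s f g a i \<le> dipath_mix n e s f g b i"
      using ab that s by (simp add: dipath_mix_def add_mono mult_left_mono)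
  qed
  moreover have "(\<Sum>i<n. dipath_mix n e s f g t i) = t" if "t \<in> {0..e}" for t
  proof -
    have "(\<Sum>i<n. dipath_mix n e s f g t i) = (1 - s) * (\<Sum>i<n. f t i) + s * (\<Sum>i<n. g t i)"
      using that by (simp add: dipath_mix_def sum.distrib sum_distrib_left)
    also have "\<dots> = t" using f(3) g(3) that by (simp add: algebra_simps)
    finally show ?thesis .
  qed
  ultimately show ?thesis
    by (simp add: N_def natural_dipath_iff[OF assms(1)])
qed

lemma continuous_map_dipath_mix:
  assumes "0 \<le> e" "g \<in> N n e"
  shows "continuous_map (prod_topology (top_of_set {0..1}) (N_pointwise n e)) (N_pointwise n e)
           (\<lambda>(s, f). dipath_mix n e s f g)"
proof (rule continuous_map_into_N_pointwise)
  show "(\<lambda>(s, f). dipath_mix n e s f g) \<in> topspace (prod_topology (top_of_set {0..1}) (N_pointwise n e)) \<rightarrow> N n e"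
    using dipath_mix_in_N[OF assms(1) _ assms(2)] by auto
next
  fix t i assume t: "t \<in> {0..e}" and i: "i < n"
  have "continuous_map (prod_topology (top_of_set {0..1}) (N_pointwise n e)) euclideanreal
      (\<lambda>x. (1 - fst x) * snd x t i + fst x * g t i)"
    by (intro continuous_map_add continuous_map_real_mult continuous_map_diff
        continuous_map_compose[OF continuous_map_snd continuous_map_N_pointwise_eval[OF t i], unfolded o_def]
        continuous_map_compose[OF continuous_map_fst continuous_map_from_subtopology[OF continuous_map_id], unfolded o_def id_def]
        continuous_map_const[THEN iffD2]) auto
  then show "continuous_map (prod_topology (top_of_set {0..1}) (N_pointwise n e)) euclideanreal
      (\<lambda>x. (case x of (s, f) \<Rightarrow> dipath_mix n e s f g) t i)"
    using t i by (simp add: dipath_mix_def case_prod_beta')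
qed

lemma contractible_space_N_pointwise:
  assumes "0 \<le> e" "g \<in> N n e"
  shows "contractible_space (N_pointwise n e)"
  unfolding contractible_space_def
proof
  show "homotopic_with (\<lambda>x. True) (N_pointwise n e) (N_pointwise n e) id (\<lambda>x. g)"
    unfolding homotopic_with[where P = "\<lambda>x. True", simplified]
    using continuous_map_dipath_mix[OF assms] dipath_mix_0 dipath_mix_1[OF assms(2)]
    by (intro exI[of _ "\<lambda>(s, f). dipath_mix n e s f g"]) auto
qed

lemma N_axis_path:
  assumes "1 \<le> n" "0 \<le> e" "e \<le> 1"
  shows "(\<lambda>t\<in>{0..e}. \<lambda>i\<in>{..<n}. if i = 0 then t else 0) \<in> N n e"
proof -
  have "(\<Sum>i<n. if i = 0 then t else 0) = t" for t :: real
    using assms(1) by (simp add: sum.delta)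
  then show ?thesis
    using assms by (auto simp: N_def natural_dipath_iff cube_set_def mono_on_def)
qed

section \<open>\<open>\<Delta>\<close>-generation\<close>

lemma topspace_simplex_top [simp]: "topspace (simplex_top m) = standard_simplex m"
  unfolding simplex_top_def by simp

lemma continuous_map_simplex_top_coordinate:
  "continuous_map (simplex_top m) (top_of_set {0..1}) (\<lambda>y. y k)"
  unfolding continuous_map_in_subtopology simplex_top_def
  by (auto intro: continuous_map_from_subtopology continuous_map_product_projection
      simp: standard_simplex_def)

definition simplex_edge :: "real \<Rightarrow> nat \<Rightarrow> real" where
  "simplex_edge s = (\<lambda>j. if j = 0 then s else if j = 1 then 1 - s else 0)"

lemma simplex_edge_0 [simp]: "simplex_edge s 0 = s"
  by (simp add: simplex_edge_def)

lemma simplex_edge_in_standard_simplex: "s \<in> {0..1} \<Longrightarrow> simplex_edge s \<in> standard_simplex 1"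
  by (auto simp: simplex_edge_def standard_simplex_def)

lemma continuous_map_simplex_edge: "continuous_map (top_of_set {0..1}) (simplex_top 1) simplex_edge"
proof -
  have "continuous_map (top_of_set {0..1}) euclideanreal (\<lambda>s. simplex_edge s j)" for j
  proof -
    consider "j = 0" | "j = 1" | "j \<noteq> 0 \<and> j \<noteq> 1" by blast
    then have "continuous_on {0..1} (\<lambda>s. simplex_edge s j)"
      by cases (auto simp: simplex_edge_def intro!: continuous_intros)
    then show ?thesis by (simp only: continuous_map_iff_continuous)
  qed
  then show ?thesis
    unfolding simplex_top_def continuous_map_in_subtopology continuous_map_componentwise_UNIV
    using simplex_edge_in_standard_simplex by auto
qed

lemma openin_path_preimage_if_simplex_open:
  assumes p: "continuous_map (top_of_set {0..1::real}) X p"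
    and H: "\<forall>m f. continuous_map (simplex_top m) X f \<longrightarrow>
              openin (simplex_top m) {x \<in> standard_simplex m. f x \<in> U}"
  shows "openin (top_of_set {0..1}) {s \<in> {0..1}. p s \<in> U}"
proof -
  have "continuous_map (simplex_top 1) X (\<lambda>y. p (y 0))"
    using continuous_map_compose[OF continuous_map_simplex_top_coordinate p] by (simp add: o_def)
  then have "openin (simplex_top 1) {y \<in> standard_simplex 1. p (y 0) \<in> U}"
    using H by blast
  from openin_continuous_map_preimage[OF continuous_map_simplex_edge this]
  have "openin (top_of_set {0..1})
      {s \<in> topspace (top_of_set {0..1}). simplex_edge s \<in> {y \<in> standard_simplex 1. p (y 0) \<in> U}}" .
  moreover have "{s \<in> topspace (top_of_set {0..1}). simplex_edge s \<in> {y \<in> standard_simplex 1. p (y 0) \<in> U}} =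
      {s \<in> {0..1}. p s \<in> U}"
    using simplex_edge_in_standard_simplex by auto
  ultimately show ?thesis by simp
qed

lemma metrizable_space_not_openin_imp_sequence:
  assumes "metrizable_space X" "U \<subseteq> topspace X" "\<not> openin X U"
  obtains \<sigma> x where "range \<sigma> \<subseteq> topspace X - U" "limitin X \<sigma> x sequentially" "x \<in> U"
proof -
  obtain M d where M: "Metric_space M d" and X: "X = Metric_space.mtopology M d"
    using assms(1) unfolding metrizable_space_def by blast
  interpret Metric_space M d by (fact M)
  have "\<not> closedin X (topspace X - U)"
    using assms(2,3) by (simp add: closedin_def double_diff)
  then obtain \<sigma> x where "range \<sigma> \<subseteq> topspace X - U"
    and lim: "limitin X \<sigma> x sequentially" and "x \<notin> topspace X - U"
    using metric_closedin_iff_sequentially_closed[of "topspace X - U"]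
    unfolding X topspace_mtopology by auto
  moreover have "x \<in> topspace X" using lim by (rule limitin_topspace)
  ultimately show thesis using that by blast
qed

text \<open>A metrizable space is sequential, and a sequence that lies on a path through its limit
  can be detected by the 1-simplex.\<close>
lemma delta_generated_if_convergent_sequences_on_paths:
  assumes "metrizable_space X"
    and paths: "\<And>\<sigma> x. range \<sigma> \<subseteq> topspace X \<Longrightarrow> limitin X \<sigma> x sequentially \<Longrightarrow>
      \<exists>p t. continuous_map (top_of_set {0..1::real}) X p \<and> p 0 = x \<and>
            range t \<subseteq> {0..1} \<and> t \<longlonglongrightarrow> 0 \<and> (\<forall>k. p (t k) = \<sigma> k)"
  shows "delta_generated X"
  unfolding delta_generated_def
proof (intro allI impI iffI)
  fix U m f
  assume "openin X U" "continuous_map (simplex_top m) X f"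
  from openin_continuous_map_preimage[OF this(2,1)]
  show "openin (simplex_top m) {x \<in> standard_simplex m. f x \<in> U}" by simp
next
  fix U assume U: "U \<subseteq> topspace X"
    and H: "\<forall>m f. continuous_map (simplex_top m) X f \<longrightarrow>
              openin (simplex_top m) {x \<in> standard_simplex m. f x \<in> U}"
  show "openin X U"
  proof (rule ccontr)
    assume "\<not> openin X U"
    with assms(1) U obtain \<sigma> x where \<sigma>: "range \<sigma> \<subseteq> topspace X - U"
      and lim: "limitin X \<sigma> x sequentially" and "x \<in> U"
      by (rule metrizable_space_not_openin_imp_sequence)
    have "range \<sigma> \<subseteq> topspace X" using \<sigma> by blast
    then obtain p t where p: "continuous_map (top_of_set {0..1::real}) X p" "p 0 = x"
      and t: "range t \<subseteq> {0..1}" "t \<longlonglongrightarrow> 0" "\<And>k. p (t k) = \<sigma> k"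
      using paths[OF _ lim] by blast
    from p(1) H have "openin (top_of_set {0..1}) {s \<in> {0..1}. p s \<in> U}"
      by (rule openin_path_preimage_if_simplex_open)
    then obtain T where "open T" and T: "{s \<in> {0..1}. p s \<in> U} = {0..1} \<inter> T"
      unfolding openin_open by blast
    have "0 \<in> {s \<in> {0..1}. p s \<in> U}" using p(2) \<open>x \<in> U\<close> by simp
    then have "0 \<in> T" unfolding T by simp
    from topological_tendstoD[OF t(2) \<open>open T\<close> this]
    obtain k where "t k \<in> T" by (metis eventually_sequentially order_refl)
    moreover have "t k \<in> {0..1}" using t(1) by blast
    ultimately have "t k \<in> {s \<in> {0..1}. p s \<in> U}" unfolding T by blast
    then have "\<sigma> k \<in> U" using t(3) by simp
    then show False using \<sigma> by auto
  qed
qed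

definition linear_interpolation :: "(int \<Rightarrow> real) \<Rightarrow> real \<Rightarrow> real" where
  "linear_interpolation A v = (1 - frac v) * A \<lfloor>v\<rfloor> + frac v * A (\<lfloor>v\<rfloor> + 1)"

lemma linear_interpolation_affine:
  assumes "of_int k \<le> v" "v \<le> of_int k + 1"
  shows "linear_interpolation A v = A k + (v - of_int k) * (A (k + 1) - A k)"
proof (cases "v < of_int k + 1")
  case True
  then have "\<lfloor>v\<rfloor> = k" using assms by (simp add: floor_eq_iff)
  then show ?thesis unfolding linear_interpolation_def frac_def by (simp add: algebra_simps)
next
  case False
  then have "v = of_int (k + 1)" using assms by simp
  then show ?thesis unfolding linear_interpolation_def by (simp add: algebra_simps)
qed

lemma isCont_linear_interpolation: "isCont (linear_interpolation A) v"
proof -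
  have affine: "continuous_on {of_int k..of_int k + 1} (linear_interpolation A)" for k
    by (rule continuous_on_eq[where f = "\<lambda>v. A k + (v - of_int k) * (A (k + 1) - A k)"])
      (auto intro!: continuous_intros simp: linear_interpolation_affine)
  let ?k = "\<lfloor>v\<rfloor>"
  have "continuous_on {of_int ?k - 1..of_int ?k} (linear_interpolation A)"
    using affine[of "?k - 1"] by simp
  then have "continuous_on ({of_int ?k - 1..of_int ?k} \<union> {of_int ?k..of_int ?k + 1}) (linear_interpolation A)"
    using affine[of ?k] by (intro continuous_on_closed_Un closed_atLeastAtMost)
  then have "continuous_on {of_int ?k - 1..of_int ?k + 1} (linear_interpolation A)"
    by (subst (asm) ivl_disj_un_two_touch(4)) simp_all
  moreover have "of_int ?k - 1 < v" using of_int_floor_le[of v] by linarith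
  then have "v \<in> interior {of_int ?k - 1..of_int ?k + 1}" by simp
  ultimately show ?thesis by (rule continuous_on_interior)
qed

lemma abs_convex_comb_le:
  fixes x y l :: real
  assumes "0 \<le> l" "l \<le> 1"
  shows "\<bar>(1 - l) * x + l * y\<bar> \<le> \<bar>x\<bar> + \<bar>y\<bar>"
proof -
  have "\<bar>(1 - l) * x + l * y\<bar> \<le> \<bar>(1 - l) * x\<bar> + \<bar>l * y\<bar>" by (rule abs_triangle_ineq)
  also have "\<dots> = (1 - l) * \<bar>x\<bar> + l * \<bar>y\<bar>" using assms by (simp add: abs_mult)
  also have "\<dots> \<le> \<bar>x\<bar> + \<bar>y\<bar>" using assms by (intro add_mono mult_left_le_one_le) auto
  finally show ?thesis .
qed

lemma tendsto_linear_interpolation_at_top: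
  assumes "(A \<longlongrightarrow> a) at_top"
  shows "(linear_interpolation A \<longlongrightarrow> a) at_top"
proof -
  have lim0: "((\<lambda>v. A \<lfloor>v\<rfloor>) \<longlongrightarrow> a) (at_top :: real filter)"
    by (rule filterlim_compose[OF assms filterlim_floor_sequentially])
  have "filterlim (\<lambda>v::real. 1 + v) at_top at_top"
    by (rule filterlim_tendsto_add_at_top[OF tendsto_const filterlim_ident])
  from filterlim_compose[OF lim0 this]
  have lim1: "((\<lambda>v. A (\<lfloor>v\<rfloor> + 1)) \<longlongrightarrow> a) (at_top :: real filter)"
    by (simp only: add.commute[of 1] one_add_floor)
  have bound: "norm (linear_interpolation A v - a) \<le> \<bar>A \<lfloor>v\<rfloor> - a\<bar> + \<bar>A (\<lfloor>v\<rfloor> + 1) - a\<bar>" for v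
  proof -
    have eq: "linear_interpolation A v - a = (1 - frac v) * (A \<lfloor>v\<rfloor> - a) + frac v * (A (\<lfloor>v\<rfloor> + 1) - a)"
      by (simp add: linear_interpolation_def algebra_simps)
    have "0 \<le> frac v" "frac v \<le> 1" using frac_lt_1[of v] by auto
    then show ?thesis unfolding real_norm_def eq by (rule abs_convex_comb_le)
  qed
  have "((\<lambda>v. \<bar>A \<lfloor>v\<rfloor> - a\<bar> + \<bar>A (\<lfloor>v\<rfloor> + 1) - a\<bar>) \<longlongrightarrow> 0) (at_top :: real filter)"
    using tendsto_add_zero[OF tendsto_rabs_zero[OF LIM_zero[OF lim0]] tendsto_rabs_zero[OF LIM_zero[OF lim1]]] .
  then have "((\<lambda>v. linear_interpolation A v - a) \<longlongrightarrow> 0) at_top"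
    by (rule Lim_null_comparison[OF always_eventually[OF allI[OF bound]]])
  then show ?thesis by (rule LIM_zero_cancel)
qed

lemma continuous_on_linear_interpolation_path:
  assumes "(A \<longlongrightarrow> a) at_top"
  shows "continuous_on {0..1} (\<lambda>s. if s = 0 then a else linear_interpolation A (inverse s - 1))"
    (is "continuous_on _ ?p")
  unfolding continuous_on_eq_continuous_within
proof
  fix s :: real assume s: "s \<in> {0..1}"
  show "continuous (at s within {0..1}) ?p"
  proof (cases "s = 0")
    case True
    have "LIM s at_right (0::real). inverse s - 1 :> at_top"
      using filterlim_tendsto_add_at_top[OF tendsto_const[of "-1"] filterlim_inverse_at_top_right]
      by simp
    from filterlim_compose[OF tendsto_linear_interpolation_at_top[OF assms] this]
    have "((\<lambda>s. linear_interpolation A (inverse s - 1)) \<longlongrightarrow> a) (at_right 0)" .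
    moreover have "eventually (\<lambda>s. linear_interpolation A (inverse s - 1) = ?p s) (at_right 0)"
      using eventually_at_right_less[of "0::real"] by (rule eventually_mono) simp
    ultimately have "(?p \<longlongrightarrow> a) (at_right 0)" by (rule Lim_transform_eventually)
    then show ?thesis
      using True by (simp add: continuous_within at_within_Icc_at_right)
  next
    case False
    then have "isCont (\<lambda>s. inverse s - 1) s" by (auto intro!: continuous_intros)
    then have "isCont (\<lambda>s. linear_interpolation A (inverse s - 1)) s"
      by (rule isCont_o2[OF _ isCont_linear_interpolation])
    then have "continuous (at s within {0..1}) (\<lambda>s. linear_interpolation A (inverse s - 1))"
      by (rule continuous_at_imp_continuous_within)
    then show ?thesis
    proof (rule continuous_transform_within[where \<delta> = s])
      show "0 < s" using False s by simp
      show "s \<in> {0..1}" by (fact s)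
      fix s' assume "dist s' s < s"
      then show "linear_interpolation A (inverse s' - 1) = ?p s'" by (auto simp: dist_real_def)
    qed
  qed
qed

text \<open>The polygonal path through \<open>\<sigma> 0, \<sigma> 1, \<dots>\<close>, reaching \<open>\<sigma> k\<close> at time \<open>1 / (k + 1)\<close> and the
  limit \<open>x\<close> at time 0.\<close>
definition polygonal_dipath ::
    "nat \<Rightarrow> real \<Rightarrow> (nat \<Rightarrow> real \<Rightarrow> nat \<Rightarrow> real) \<Rightarrow> (real \<Rightarrow> nat \<Rightarrow> real) \<Rightarrow> real \<Rightarrow> real \<Rightarrow> nat \<Rightarrow> real"
  where "polygonal_dipath n e \<sigma> x s = (if s = 0 then x else
      dipath_mix n e (frac (inverse s - 1)) (\<sigma> (nat \<lfloor>inverse s - 1\<rfloor>)) (\<sigma> (nat (\<lfloor>inverse s - 1\<rfloor> + 1))))"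

lemma polygonal_dipath_0: "polygonal_dipath n e \<sigma> x 0 = x"
  by (simp add: polygonal_dipath_def)

lemma polygonal_dipath_inverse_Suc:
  assumes "\<sigma> k \<in> N n e"
  shows "polygonal_dipath n e \<sigma> x (inverse (real (Suc k))) = \<sigma> k"
proof -
  have frac: "frac (real k) = 0" using frac_of_int[of "int k"] by simp
  show ?thesis using dipath_mix_0[OF assms] by (simp add: polygonal_dipath_def frac)
qed

lemma continuous_map_polygonal_dipath:
  assumes "0 \<le> e" "range \<sigma> \<subseteq> N n e" "limitin (N_pointwise n e) \<sigma> x sequentially"
  shows "continuous_map (top_of_set {0..1}) (N_pointwise n e) (polygonal_dipath n e \<sigma> x)"
proof (rule continuous_map_into_N_pointwise)
  have "x \<in> N n e" using limitin_topspace[OF assms(3)] by simp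
  moreover have "\<sigma> k \<in> N n e" for k using assms(2) by blast
  moreover have "frac r \<in> {0..1}" for r :: real using frac_lt_1[of r] by simp
  ultimately show "polygonal_dipath n e \<sigma> x \<in> topspace (top_of_set {0..1}) \<rightarrow> N n e"
    using assms(1) by (auto simp: polygonal_dipath_def intro!: dipath_mix_in_N)
next
  fix t i assume t: "t \<in> {0..e}" and i: "i < n"
  have "(\<lambda>k. \<sigma> k t i) \<longlonglongrightarrow> x t i"
    using continuous_map_limit[OF continuous_map_N_pointwise_eval[OF t i] assms(3)] by (simp add: o_def)
  then have lim: "((\<lambda>j. \<sigma> (nat j) t i) \<longlongrightarrow> x t i) at_top"
    by (rule filterlim_compose[OF _ filterlim_nat_sequentially])
  have eq: "(\<lambda>s. polygonal_dipath n e \<sigma> x s t i) =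
      (\<lambda>s. if s = 0 then x t i else linear_interpolation (\<lambda>j. \<sigma> (nat j) t i) (inverse s - 1))"
    using t i by (simp add: polygonal_dipath_def dipath_mix_def linear_interpolation_def fun_eq_iff)
  have "continuous_on {0..1} (\<lambda>s. polygonal_dipath n e \<sigma> x s t i)"
    unfolding eq by (rule continuous_on_linear_interpolation_path[OF lim])
  then show "continuous_map (top_of_set {0..1}) euclideanreal (\<lambda>s. polygonal_dipath n e \<sigma> x s t i)"
    by simp
qed

lemma delta_generated_N_pointwise:
  assumes "0 < e"
  shows "delta_generated (N_pointwise n e)"
proof (rule delta_generated_if_convergent_sequences_on_paths)
  show "metrizable_space (N_pointwise n e)" using assms by (rule metrizable_space_N_pointwise)
next
  fix \<sigma> x assume "range \<sigma> \<subseteq> topspace (N_pointwise n e)"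
    and lim: "limitin (N_pointwise n e) \<sigma> x sequentially"
  then have \<sigma>: "range \<sigma> \<subseteq> N n e" by simp
  show "\<exists>p t. continuous_map (top_of_set {0..1::real}) (N_pointwise n e) p \<and> p 0 = x \<and>
      range t \<subseteq> {0..1} \<and> t \<longlonglongrightarrow> 0 \<and> (\<forall>k. p (t k) = \<sigma> k)"
  proof (intro exI conjI allI)
    show "continuous_map (top_of_set {0..1}) (N_pointwise n e) (polygonal_dipath n e \<sigma> x)"
      using assms \<sigma> lim by (intro continuous_map_polygonal_dipath) auto
    show "polygonal_dipath n e \<sigma> x 0 = x" by (rule polygonal_dipath_0)
    show "range (\<lambda>k. inverse (real (Suc k))) \<subseteq> {0..1}" by (auto simp: inverse_le_1_iff)
    show "(\<lambda>k. inverse (real (Suc k))) \<longlonglongrightarrow> 0" by (rule LIMSEQ_inverse_real_of_nat)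
    fix k
    show "polygonal_dipath n e \<sigma> x (inverse (real (Suc k))) = \<sigma> k"
      using \<sigma> by (intro polygonal_dipath_inverse_Suc) auto
  qed
qed

theorem proposition4p7:
  fixes \<epsilon> :: real
  assumes "0 < \<epsilon>" and "\<epsilon> < 1"
  shows "N 0 \<epsilon> = {} \<and>
    (\<forall>n\<ge>1. let T = subtopology (compact_open (top_of_set {0..\<epsilon>}) (cube_top n)) (N n \<epsilon>) in
       delta_generated T \<and> delta_hausdorff T \<and> metrizable_space T \<and> contractible_space T \<and>
       compact_space T \<and> Hausdorff_space T \<and> sequentially_compact_top T)"
proof
  show "N 0 \<epsilon> = {}" using assms(1) by (rule N_0_empty)
  show "\<forall>n\<ge>1. let T = subtopology (compact_open (top_of_set {0..\<epsilon>}) (cube_top n)) (N n \<epsilon>) in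
       delta_generated T \<and> delta_hausdorff T \<and> metrizable_space T \<and> contractible_space T \<and>
       compact_space T \<and> Hausdorff_space T \<and> sequentially_compact_top T"
  proof (intro allI impI)
    fix n :: nat assume "n \<ge> 1"
    have "0 \<le> \<epsilon>" "\<epsilon> \<le> 1" using assms by auto
    have compact: "compact_space (N_pointwise n \<epsilon>)"
      using \<open>0 \<le> \<epsilon>\<close> by (rule compact_space_N_pointwise)
    have metrizable: "metrizable_space (N_pointwise n \<epsilon>)"
      using assms(1) by (rule metrizable_space_N_pointwise)
    have contractible: "contractible_space (N_pointwise n \<epsilon>)"
      using \<open>0 \<le> \<epsilon>\<close> N_axis_path[OF \<open>n \<ge> 1\<close> \<open>0 \<le> \<epsilon>\<close> \<open>\<epsilon> \<le> 1\<close>]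
      by (rule contractible_space_N_pointwise)
    show "let T = subtopology (compact_open (top_of_set {0..\<epsilon>}) (cube_top n)) (N n \<epsilon>) in
       delta_generated T \<and> delta_hausdorff T \<and> metrizable_space T \<and> contractible_space T \<and>
       compact_space T \<and> Hausdorff_space T \<and> sequentially_compact_top T"
      unfolding Let_def compact_open_N_eq_N_pointwise
      using delta_generated_N_pointwise[OF assms(1)] delta_hausdorff_if_Hausdorff
        Hausdorff_space_N_pointwise sequentially_compact_top_if_compact_metrizable[OF compact metrizable]
        compact metrizable contractible
      by blast
  qed
qed

end
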